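(* In the setting described in the context, let $i\in[m]$, $S\subseteq[k]$ and $t\in[k]\setminus S$. Then $$\big\|\mathsf{P}_{Y_i}\mathsf{P}_{\Omega_{-i}Z|W,Y_i^S=\perp^S,Y_i^{\overline{S}}}-\mathsf{P}_{Y_i}\mathsf{P}_{\Omega_{-i}Z|W,Y_i^{S\cup\{t\}}=\perp^{S\cup\{t\}},Y_i^{\overline{S}\setminus\{t\}}}\big\|\le 2\alpha^{-(|S|+1)}\big\|\mathsf{P}_{Y_i}\mathsf{P}_{Z\Omega_{-i}|W,Y_i}-\mathsf{P}_{Y_i}\mathsf{P}_{Z\Omega_{-i}|W,Y_i^{-t}}\big\|.$$
   Context: Let $G=(\mathcal{X},\mathcal{A},\mu,V)$ be a $k$-player game: $\mathcal{X}=\mathcal{X}^1\times\cdots\times\mathcal{X}^k$, $\mathcal{A}=\mathcal{A}^1\times\cdots\times\mathcal{A}^k$ finite, $\mu$ a distribution on $\mathcal{X}$, $V:\mathcal{X}\times\mathcal{A}\to\{0,1\}$. Assume $G$ is $\alpha$-anchored ($0<\alpha\le1$) with anchor sets $\mathcal{X}^t_\perp\subseteq\mathcal{X}^t$: the marginal probability that $x^t\in\mathcal{X}^t_\perp$ is at least $\alpha$ for each $t$, and $\mu(x)=\mu(x|_{\overline{F}_x})\prod_{t\in F_x}\mu(x^t)$ for all $x$, where $F_x=\{t:x^t\in\mathcal{X}^t_\perp\}$, $\overline F_x=[k]\setminus F_x$, and $\mu(x|_S)$, $\mu(x^t)$ are marginals. Fix $n$, integers $1\le m<n$, $C=\{m+1,\dots,n\}$,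 and a deterministic strategy for $G^n$, i.e. functions $f^t:(\mathcal{X}^t)^n\to(\mathcal{A}^t)^n$. Let $X=(X_1,\dots,X_n)$, $X_i=(X_i^1,\dots,X_i^k)$, be distributed as $\mu^{\otimes n}$, let $(A_1^t,\dots,A_n^t)=f^t(X_1^t,\dots,X_n^t)$, $A_i=(A_i^1,\dots,A_i^k)$, and $Z=(A_j)_{j\in C}$. Let $W$ be the event that $V(X_j,A_j)=1$ for all $j\in C$, with $\Pr(W)>0$. For each $i,t$ let $Y_i^t=X_i^t$ if $X_i^t\notin\mathcal{X}^t_\perp$ and $Y_i^t=\perp$ otherwise; $Y_i=(Y_i^1,\dots,Y_i^k)$; for $S\subseteq[k]$, $Y_i^S=(Y_i^s)_{s\in S}$, $\overline S=[k]\setminus S$, $\perp^S$ is the all-$\perp$ tuple indexed by $S$, and $Y_i^{-t}=Y_i^{[k]\setminus\{t\}}$. For $i\in[m]$ let $D_i$ be a uniformly random subset of $[k]$ of size $k-1$, independent of each other and of $X$; $M_i=Y_i^{D_i}$, $\Omega_i=(D_i,M_i)$; for $j\in C$, $\Omega_j=X_j$. $\Omega_{-i}$ is $(\Omega_1,\dots,\Omega_n)$ with $\Omega_i$ omitted. Notation: for random variables $R\subseteq$ components of $Y_i$, $\mathsf{P}_{Y_i}\mathsf{P}_{\Omega_{-i}Z|W,Y_i^{S}=\perp^S,Y_i^{T}}$ denotes the distribution $(y,\omega,z)\mapsto\mathsf{P}_{Y_i}(y)\,\mathsf{P}_{\Omega_{-i}Z|W,Y_i^S=\perp^S,Y_i^{T}=y^{T}}(\omega,z)$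 (and similarly with no fixed part); $\|\cdot\|$ is total variation distance. *)

theory Defs
  imports Complex_Main "HOL-Library.FuncSet"
begin

text \<open>Conventions: players are indexed by {1..k}, coordinates by {1..n}.  The value bottom is represented by None.\<close>

definition pr :: "'w set \<Rightarrow> ('w \<Rightarrow> real) \<Rightarrow> ('w \<Rightarrow> bool) \<Rightarrow> real" where
  "pr \<Omega> w E = (\<Sum>\<omega>\<in>\<Omega>. if E \<omega> then w \<omega> else 0)"

text \<open>Conditional probability P(R = r | E); equals 0 if Pr(E) = 0.\<close>
definition cpr :: "'w set \<Rightarrow> ('w \<Rightarrow> real) \<Rightarrow> ('w \<Rightarrow> 'r) \<Rightarrow> ('w \<Rightarrow> bool) \<Rightarrow> 'r \<Rightarrow> real" where
  "cpr \<Omega> w R E r = pr \<Omega> w (\<lambda>\<omega>. R \<omega> = r \<and> E \<omega>) / pr \<Omega> w E"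

definition prod_cond :: "'w set \<Rightarrow> ('w \<Rightarrow> real) \<Rightarrow> ('w \<Rightarrow> 'y) \<Rightarrow> ('w \<Rightarrow> 'r)
    \<Rightarrow> ('w \<Rightarrow> bool) \<Rightarrow> ('y \<Rightarrow> 'w \<Rightarrow> bool) \<Rightarrow> 'y \<times> 'r \<Rightarrow> real" where
  "prod_cond \<Omega> w Y R E Cd = (\<lambda>(y, r). pr \<Omega> w (\<lambda>\<omega>. Y \<omega> = y) * cpr \<Omega> w R (\<lambda>\<omega>. E \<omega> \<and> Cd y \<omega>) r)"

definition tvd :: "'u set \<Rightarrow> ('u \<Rightarrow> real) \<Rightarrow> ('u \<Rightarrow> real) \<Rightarrow> real" where
  "tvd U p q = (1/2) * (\<Sum>u\<in>U. \<bar>p u - q u\<bar>)"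

definition marg :: "nat \<Rightarrow> (nat \<Rightarrow> 'q set) \<Rightarrow> ((nat \<Rightarrow> 'q) \<Rightarrow> real) \<Rightarrow> nat set \<Rightarrow> (nat \<Rightarrow> 'q) \<Rightarrow> real" where
  "marg k Xs \<mu> S x = (\<Sum>x'\<in>PiE {1..k} Xs. if (\<forall>s\<in>S. x' s = x s) then \<mu> x' else 0)"

definition is_game :: "nat \<Rightarrow> (nat \<Rightarrow> 'q set) \<Rightarrow> (nat \<Rightarrow> 'a set) \<Rightarrow> ((nat \<Rightarrow> 'q) \<Rightarrow> real) \<Rightarrow> bool" where
  "is_game k Xs As \<mu> \<longleftrightarrow>
     (\<forall>t\<in>{1..k}. finite (Xs t) \<and> finite (As t)) \<and>
     (\<forall>x\<in>PiE {1..k} Xs. 0 \<le> \<mu> x) \<and> (\<Sum>x\<in>PiE {1..k} Xs. \<mu> x) = 1"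

definition anchored :: "nat \<Rightarrow> (nat \<Rightarrow> 'q set) \<Rightarrow> ((nat \<Rightarrow> 'q) \<Rightarrow> real) \<Rightarrow> real \<Rightarrow> (nat \<Rightarrow> 'q set) \<Rightarrow> bool" where
  "anchored k Xs \<mu> \<alpha> Xperp \<longleftrightarrow> 0 < \<alpha> \<and> \<alpha> \<le> 1 \<and>
     (\<forall>t\<in>{1..k}. Xperp t \<subseteq> Xs t \<and>
        \<alpha> \<le> (\<Sum>x\<in>PiE {1..k} Xs. if x t \<in> Xperp t then \<mu> x else 0)) \<and>
     (\<forall>x\<in>PiE {1..k} Xs.
        \<mu> x = marg k Xs \<mu> ({1..k} - {t\<in>{1..k}. x t \<in> Xperp t}) x *
              (\<Prod>t\<in>{t\<in>{1..k}. x t \<in> Xperp t}. marg k Xs \<mu> {t} x))"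

text \<open>Deterministic strategy for G^n: f t maps player t's n questions to n answers.\<close>
definition strategy :: "nat \<Rightarrow> nat \<Rightarrow> (nat \<Rightarrow> 'q set) \<Rightarrow> (nat \<Rightarrow> 'a set) \<Rightarrow> (nat \<Rightarrow> (nat \<Rightarrow> 'q) \<Rightarrow> (nat \<Rightarrow> 'a)) \<Rightarrow> bool" where
  "strategy k n Xs As f \<longleftrightarrow>
     (\<forall>t\<in>{1..k}. \<forall>xs\<in>PiE {1..n} (\<lambda>_. Xs t). f t xs \<in> Pi {1..n} (\<lambda>_. As t))"

definition Dsets :: "nat \<Rightarrow> nat set set" where
  "Dsets k = {D. D \<subseteq> {1..k} \<and> card D = k - 1}"

text \<open>Sample points (x, d): x i t = X_i^t, d i = D_i.\<close>
definition Samp :: "nat \<Rightarrow> nat \<Rightarrow> nat \<Rightarrow> (nat \<Rightarrow> 'q set) \<Rightarrow> ((nat \<Rightarrow> nat \<Rightarrow> 'q) \<times> (nat \<Rightarrow> nat set)) set" where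
  "Samp k n m Xs = PiE {1..n} (\<lambda>_. PiE {1..k} Xs) \<times> PiE {1..m} (\<lambda>_. Dsets k)"

definition wt :: "nat \<Rightarrow> nat \<Rightarrow> nat \<Rightarrow> ((nat \<Rightarrow> 'q) \<Rightarrow> real) \<Rightarrow> (nat \<Rightarrow> nat \<Rightarrow> 'q) \<times> (nat \<Rightarrow> nat set) \<Rightarrow> real" where
  "wt k n m \<mu> = (\<lambda>(x, d). (\<Prod>i\<in>{1..n}. \<mu> (x i)) * (\<Prod>i\<in>{1..m}. 1 / real (card (Dsets k))))"

definition ans :: "nat \<Rightarrow> nat \<Rightarrow> (nat \<Rightarrow> (nat \<Rightarrow> 'q) \<Rightarrow> (nat \<Rightarrow> 'a)) \<Rightarrow> (nat \<Rightarrow> nat \<Rightarrow> 'q) \<times> (nat \<Rightarrow> nat set) \<Rightarrow> nat \<Rightarrow> (nat \<Rightarrow> 'a)" where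
  "ans k n f \<omega> j = (\<lambda>t\<in>{1..k}. f t (\<lambda>i\<in>{1..n}. fst \<omega> i t) j)"

definition Zrv where
  "Zrv k n m f \<omega> = (\<lambda>j\<in>{m+1..n}. ans k n f \<omega> j)"

definition Wev where
  "Wev k n m f V \<omega> \<longleftrightarrow> (\<forall>j\<in>{m+1..n}. V (fst \<omega> j) (ans k n f \<omega> j))"

definition Yrv :: "nat \<Rightarrow> (nat \<Rightarrow> 'q set) \<Rightarrow> nat \<Rightarrow> (nat \<Rightarrow> nat \<Rightarrow> 'q) \<times> (nat \<Rightarrow> nat set) \<Rightarrow> nat \<Rightarrow> 'q option" where
  "Yrv k Xperp i \<omega> = (\<lambda>t\<in>{1..k}. if fst \<omega> i t \<in> Xperp t then None else Some (fst \<omega> i t))"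

text \<open>Omega_j = (D_j, M_j) with M_j = Y_j^{D_j} for j <= m, and Omega_j = X_j otherwise.\<close>
definition Omg where
  "Omg k m Xperp j \<omega> = (if j \<le> m then Inl (snd \<omega> j, restrict (Yrv k Xperp j \<omega>) (snd \<omega> j)) else Inr (fst \<omega> j))"

definition Omg_minus where
  "Omg_minus k n m Xperp i \<omega> = (\<lambda>j\<in>{1..n} - {i}. Omg k m Xperp j \<omega>)"

text \<open>Conditioning event Y_i^S = bottom^S and Y_i^T = y^T.\<close>
definition condY where
  "condY Y S T = (\<lambda>y \<omega>. restrict (Y \<omega>) S = (\<lambda>s\<in>S. None) \<and> restrict (Y \<omega>) T = restrict y T)"

text \<open>The distribution P_{Y_i} P_{Omega_{-i} Z | W, Y_i^S = bottom^S, Y_i^T}.\<close>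
definition Pdist where
  "Pdist k n m Xs \<mu> Xperp f V i S T =
     prod_cond (Samp k n m Xs) (wt k n m \<mu>) (Yrv k Xperp i)
       (\<lambda>\<omega>. (Omg_minus k n m Xperp i \<omega>, Zrv k n m f \<omega>)) (Wev k n m f V)
       (condY (Yrv k Xperp i) S T)"

text \<open>A finite set containing the supports of all the distributions Pdist.\<close>
definition Usupp where
  "Usupp k n m Xs Xperp f i =
     Yrv k Xperp i ` Samp k n m Xs \<times> (\<lambda>\<omega>. (Omg_minus k n m Xperp i \<omega>, Zrv k n m f \<omega>)) ` Samp k n m Xs"

end

theory Submission
  imports Defs
begin

text \<open>
  In an anchored game, once the non-anchored coordinates of a question tuple are fixed, the
  events that the other coordinates \<open>s\<close> are anchored are independent, with probabilities
  \<open>p s \<ge> \<alpha>\<close>.  Hence, for a set \<open>T\<close> of coordinates with complement \<open>T'\<close>,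
  Pr[Y^T = \<bottom>, Y^T' = z] = (\<Prod>s\<in>T. p s) Pr[Y^T' = z], so averaging a nonnegative function of
  Y_i with the coordinates in \<open>T\<close> blanked out costs at most a factor \<open>\<alpha>\<close>^-|T|.  The lemma
  follows by the triangle inequality through the law conditioned on Y_i^-t, which does not see
  coordinate \<open>t\<close>, applied with \<open>T = S\<close> and with \<open>T = S \<union> {t}\<close>.
\<close>

lemma sum_fibres:
  fixes g w :: "_ \<Rightarrow> 'c::semiring_0"
  assumes "finite B"
  shows "(\<Sum>b\<in>B. g b * (\<Sum>x\<in>A. if h x = b then w x else 0))
       = (\<Sum>x\<in>A. if h x \<in> B then g (h x) * w x else 0)"
proof -
  have "(\<Sum>b\<in>B. g b * (\<Sum>x\<in>A. if h x = b then w x else 0))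
      = (\<Sum>b\<in>B. \<Sum>x\<in>A. if h x = b then g b * w x else 0)"
    unfolding sum_distrib_left by (intro sum.cong refl) auto
  also have "\<dots> = (\<Sum>x\<in>A. \<Sum>b\<in>B. if h x = b then g b * w x else 0)"
    by (rule sum.swap)
  also have "\<dots> = (\<Sum>x\<in>A. if h x \<in> B then g (h x) * w x else 0)"
    using assms by (intro sum.cong refl) (simp add: sum.delta)
  finally show ?thesis .
qed

lemma sum_PiE_Un_mult:
  fixes f g :: "_ \<Rightarrow> 'c::comm_semiring_1"
  assumes "A \<inter> B = {}"
  shows "(\<Sum>x\<in>PiE (A \<union> B) X. f (restrict x A) * g (restrict x B))
       = (\<Sum>u\<in>PiE A X. f u) * (\<Sum>v\<in>PiE B X. g v)"
proof -
  let ?join = "\<lambda>(u, v) s. if s \<in> A then u s else v s"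
  have "(\<Sum>u\<in>PiE A X. f u) * (\<Sum>v\<in>PiE B X. g v) = (\<Sum>(u, v)\<in>PiE A X \<times> PiE B X. f u * g v)"
    by (simp add: sum_product sum.cartesian_product)
  also have "\<dots> = (\<Sum>x\<in>PiE (A \<union> B) X. f (restrict x A) * g (restrict x B))"
  proof (rule sum.reindex_bij_witness[of _ "\<lambda>x. (restrict x A, restrict x B)" ?join])
    fix uv assume uv: "uv \<in> PiE A X \<times> PiE B X"
    show split: "(restrict (?join uv) A, restrict (?join uv) B) = uv"
      using uv assms by (auto simp: PiE_def extensional_def fun_eq_iff)
    show "?join uv \<in> PiE (A \<union> B) X"
      using uv by (auto simp: PiE_def extensional_def Pi_def)
    show "f (restrict (?join uv) A) * g (restrict (?join uv) B) = (case uv of (u, v) \<Rightarrow> f u * g v)"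
      using split by (auto split: prod.splits)
  qed (auto simp: PiE_def extensional_def fun_eq_iff)
  finally show ?thesis ..
qed

lemma sum_Pow_insert:
  assumes "finite F" "u \<notin> F"
  shows "(\<Sum>F'\<in>Pow (insert u F). g F') = (\<Sum>F'\<in>Pow F. g F') + (\<Sum>F'\<in>Pow F. g (insert u F'))"
proof -
  have "(\<Sum>F'\<in>Pow (insert u F). g F') = (\<Sum>F'\<in>Pow F. g F') + (\<Sum>F'\<in>insert u ` Pow F. g F')"
    unfolding Pow_insert using assms by (intro sum.union_disjoint) auto
  also have "(\<Sum>F'\<in>insert u ` Pow F. g F') = (\<Sum>F'\<in>Pow F. g (insert u F'))"
    using assms by (subst sum.reindex) (auto simp: inj_on_def)
  finally show ?thesis .
qed

section \<open>Independent anchor patterns\<close>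

text \<open>
  Here \<open>\<pi> F\<close> is the weight of the outcomes whose set of anchored coordinates is exactly
  \<open>F \<subseteq> R\<close>; the factorisation assumption is what anchoring provides, and it forces the anchor
  events to be independent with probabilities \<open>p\<close>.
\<close>

context
  fixes R :: "'a set" and \<pi> :: "'a set \<Rightarrow> real" and p :: "'a \<Rightarrow> real"
  assumes finite_R: "finite R"
    and p_prob: "\<And>s. s \<in> R \<Longrightarrow> 0 \<le> p s \<and> p s \<le> 1"
    and \<pi>_nonneg: "\<And>F. F \<subseteq> R \<Longrightarrow> 0 \<le> \<pi> F"
    and \<pi>_factor: "\<And>F. F \<subseteq> R \<Longrightarrow> \<pi> F = (\<Prod>s\<in>F. p s) * (\<Sum>F'\<in>Pow F. \<pi> F')"
begin

lemma pattern_odds_defect: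
  assumes u: "u \<in> R" and F: "F \<subseteq> R - {u}"
  shows "(1 - p u) * \<pi> (insert u F) - p u * \<pi> F
       = p u * (\<Prod>s\<in>F. p s) * (\<Sum>F'\<in>Pow F. (1 - p u) * \<pi> (insert u F') - p u * \<pi> F')"
proof -
  have fin: "finite F" and FR: "F \<subseteq> R" "insert u F \<subseteq> R" and uF: "u \<notin> F"
    using F u finite_R by (auto intro: finite_subset)
  define \<sigma> where "\<sigma> = (\<Sum>F'\<in>Pow F. \<pi> F')"
  define \<tau> where "\<tau> = (\<Sum>F'\<in>Pow F. \<pi> (insert u F'))"
  have \<pi>_F: "\<pi> F = (\<Prod>s\<in>F. p s) * \<sigma>"
    unfolding \<sigma>_def using \<pi>_factor[OF FR(1)] .
  have \<pi>_uF: "\<pi> (insert u F) = p u * (\<Prod>s\<in>F. p s) * (\<sigma> + \<tau>)"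
    using \<pi>_factor[OF FR(2)] fin uF by (simp add: \<sigma>_def \<tau>_def sum_Pow_insert)
  have sum_H: "(\<Sum>F'\<in>Pow F. (1 - p u) * \<pi> (insert u F') - p u * \<pi> F') = (1 - p u) * \<tau> - p u * \<sigma>"
    by (simp only: \<sigma>_def \<tau>_def sum_subtractf sum_distrib_left[symmetric])
  show ?thesis
    unfolding sum_H \<pi>_F \<pi>_uF by (simp add: algebra_simps)
qed

lemma pattern_odds:
  assumes u: "u \<in> R" and F: "F \<subseteq> R - {u}"
  shows "(1 - p u) * \<pi> (insert u F) = p u * \<pi> F"
proof -
  define H where "H F = (1 - p u) * \<pi> (insert u F) - p u * \<pi> F" for F
  have "finite F" using F finite_R by (meson finite_Diff finite_subset)
  then have "H F = 0" using F
  proof (induction F rule: finite_psubset_induct)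
    case (psubset F)
    have FR: "F \<subseteq> R" "insert u F \<subseteq> R" using psubset.prems u by auto
    have "(\<Sum>F'\<in>Pow F. H F') = H F + (\<Sum>F'\<in>Pow F - {F}. H F')"
      using psubset.hyps by (subst sum.remove) auto
    also have "(\<Sum>F'\<in>Pow F - {F}. H F') = 0"
      using psubset.IH psubset.prems by (intro sum.neutral) auto
    finally have H_fixed: "H F = p u * (\<Prod>s\<in>F. p s) * H F"
      using pattern_odds_defect[OF u psubset.prems] by (simp add: H_def)
    show ?case
    proof (cases "p u * (\<Prod>s\<in>F. p s) = 1")
      case False
      with H_fixed show ?thesis by (metis mult_cancel_right2)
    next
      case True
      \<comment> \<open>Then \<open>p u = 1\<close>, and \<open>\<pi> F = 0\<close> follows from the factorisation at \<open>insert u F\<close> by positivity.\<close>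
      have "0 \<le> (\<Prod>s\<in>F. p s)" "(\<Prod>s\<in>F. p s) \<le> 1"
        using p_prob FR by (auto intro: prod_nonneg prod_le_1)
      with True p_prob[OF u] have "p u = 1"
        by (metis mult_left_le order_antisym)
      have uF: "u \<notin> F" using psubset.prems by auto
      have "F \<noteq> insert u F" using uF by auto
      then have "\<pi> F + \<pi> (insert u F) = (\<Sum>F'\<in>{F, insert u F}. \<pi> F')"
        by simp
      also have "\<dots> \<le> (\<Sum>F'\<in>Pow (insert u F). \<pi> F')"
        using psubset.hyps FR(2) by (intro sum_mono2 \<pi>_nonneg) auto
      also have "\<dots> = \<pi> (insert u F)"
        using \<pi>_factor[OF FR(2)] True psubset.hyps uF by simp
      finally have "\<pi> F = 0"
        using \<pi>_nonneg[OF FR(1)] by simp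
      with \<open>p u = 1\<close> show ?thesis by (simp add: H_def)
    qed
  qed
  then show ?thesis by (simp add: H_def)
qed

lemma pattern_upper_sum_insert:
  assumes D: "D \<subseteq> R" and u: "u \<in> R - D"
  shows "p u * (\<Sum>F | D \<subseteq> F \<and> F \<subseteq> R. \<pi> F) = (\<Sum>F | insert u D \<subseteq> F \<and> F \<subseteq> R. \<pi> F)"
proof -
  define A where "A = {F. D \<subseteq> F \<and> F \<subseteq> R \<and> u \<notin> F}"
  define B where "B = {F. insert u D \<subseteq> F \<and> F \<subseteq> R}"
  have fin: "finite A" "finite B"
    unfolding A_def B_def using finite_R by (auto intro: rev_finite_subset[of "Pow R"])
  have split: "{F. D \<subseteq> F \<and> F \<subseteq> R} = A \<union> B" "A \<inter> B = {}"
    unfolding A_def B_def by auto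
  have inj: "inj_on (insert u) A"
    unfolding A_def by (auto simp: inj_on_def dest: insert_ident)
  have B_img: "B = insert u ` A"
  proof
    show "B \<subseteq> insert u ` A"
    proof
      fix F assume "F \<in> B"
      then have "F = insert u (F - {u})" "F - {u} \<in> A" using u by (auto simp: A_def B_def)
      then show "F \<in> insert u ` A" by blast
    qed
  qed (use u in \<open>auto simp: A_def B_def\<close>)
  have "p u * sum \<pi> A = (\<Sum>F\<in>A. (1 - p u) * \<pi> (insert u F))"
    unfolding sum_distrib_left using u by (intro sum.cong refl pattern_odds[symmetric]) (auto simp: A_def)
  also have "\<dots> = (1 - p u) * sum \<pi> B"
    unfolding B_img sum.reindex[OF inj] by (simp add: sum_distrib_left)
  finally show ?thesis
    unfolding split(1) sum.union_disjoint[OF fin split(2)] by (simp add: B_def algebra_simps)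
qed

lemma pattern_upper_sum:
  assumes "T \<subseteq> R"
  shows "(\<Prod>s\<in>T. p s) * (\<Sum>F | R - T \<subseteq> F \<and> F \<subseteq> R. \<pi> F) = \<pi> R"
  using finite_subset[OF assms finite_R] assms
proof (induction T rule: finite_induct)
  case empty
  have "{F. R \<subseteq> F \<and> F \<subseteq> R} = {R}" by auto
  then show ?case by simp
next
  case (insert u T)
  have "insert u (R - insert u T) = R - T" using insert by auto
  then have "p u * (\<Sum>F | R - insert u T \<subseteq> F \<and> F \<subseteq> R. \<pi> F) = (\<Sum>F | R - T \<subseteq> F \<and> F \<subseteq> R. \<pi> F)"
    using pattern_upper_sum_insert[of "R - insert u T" u] insert by auto
  moreover have "(\<Prod>s\<in>insert u T. p s) = (\<Prod>s\<in>T. p s) * p u"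
    using insert by simp
  ultimately show ?case
    using insert.IH insert.prems by (simp add: mult.assoc)
qed

end

section \<open>Conditional laws on a finite weighted space\<close>

definition bot_on :: "nat \<Rightarrow> nat set \<Rightarrow> (nat \<Rightarrow> 'b option) \<Rightarrow> nat \<Rightarrow> 'b option" where
  "bot_on k T y = (\<lambda>s\<in>{1..k}. if s \<in> T then None else y s)"

lemma bot_on_bot_on: "bot_on k T (bot_on k T' y) = bot_on k (T \<union> T') y"
  by (auto simp: bot_on_def fun_eq_iff)

lemma bot_on_empty: "y \<in> extensional {1..k} \<Longrightarrow> bot_on k {} y = y"
  by (auto simp: bot_on_def extensional_def fun_eq_iff)

lemma condY_eq_bot_on:
  assumes "T \<subseteq> {1..k}" "\<And>\<omega>. Y \<omega> \<in> extensional {1..k}"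
  shows "condY Y T ({1..k} - T) = (\<lambda>y \<omega>. Y \<omega> = bot_on k T y)"
  using assms by (auto simp: condY_def bot_on_def fun_eq_iff extensional_def restrict_def)

lemma pr_nonneg: "(\<And>\<omega>. \<omega> \<in> \<Omega> \<Longrightarrow> 0 \<le> w \<omega>) \<Longrightarrow> 0 \<le> pr \<Omega> w E"
  unfolding pr_def by (auto intro!: sum_nonneg)

lemma pr_eq_zero: "y \<notin> Y ` \<Omega> \<Longrightarrow> pr \<Omega> w (\<lambda>\<omega>. Y \<omega> = y) = 0"
  unfolding pr_def by (intro sum.neutral) auto

lemma sum_pr_values:
  assumes "finite \<Omega>"
  shows "(\<Sum>y\<in>Y ` \<Omega>. h y * pr \<Omega> w (\<lambda>\<omega>. Y \<omega> = y)) = (\<Sum>\<omega>\<in>\<Omega>. h (Y \<omega>) * w \<omega>)"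
  unfolding pr_def using assms by (simp add: sum_fibres)

lemma sum_pr_push_le:
  assumes fin: "finite \<Omega>" and w: "\<And>\<omega>. \<omega> \<in> \<Omega> \<Longrightarrow> 0 \<le> w \<omega>" and g: "\<And>v. 0 \<le> g v" and c: "0 \<le> c"
    and push: "\<And>y. y \<in> Y ` \<Omega> \<Longrightarrow> pr \<Omega> w (\<lambda>\<omega>. \<phi> (Y \<omega>) = \<phi> y) \<le> c * pr \<Omega> w (\<lambda>\<omega>. Y \<omega> = \<phi> y)"
  shows "(\<Sum>y\<in>Y ` \<Omega>. g (\<phi> y) * pr \<Omega> w (\<lambda>\<omega>. Y \<omega> = y))
       \<le> c * (\<Sum>y\<in>Y ` \<Omega>. g y * pr \<Omega> w (\<lambda>\<omega>. Y \<omega> = y))"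
proof -
  have "(\<Sum>y\<in>Y ` \<Omega>. g (\<phi> y) * pr \<Omega> w (\<lambda>\<omega>. Y \<omega> = y))
      = (\<Sum>v\<in>(\<lambda>\<omega>. \<phi> (Y \<omega>)) ` \<Omega>. g v * pr \<Omega> w (\<lambda>\<omega>. \<phi> (Y \<omega>) = v))"
    using fin by (simp add: sum_pr_values)
  also have "\<dots> \<le> (\<Sum>v\<in>(\<lambda>\<omega>. \<phi> (Y \<omega>)) ` \<Omega>. c * (g v * pr \<Omega> w (\<lambda>\<omega>. Y \<omega> = v)))"
    using push g by (intro sum_mono) (auto intro: mult_left_mono simp: mult.left_commute[of c])
  also have "\<dots> \<le> (\<Sum>v\<in>(\<lambda>\<omega>. \<phi> (Y \<omega>)) ` \<Omega> \<union> Y ` \<Omega>. c * (g v * pr \<Omega> w (\<lambda>\<omega>. Y \<omega> = v)))"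
    using fin g w c by (intro sum_mono2) (auto intro!: mult_nonneg_nonneg pr_nonneg)
  also have "\<dots> = c * (\<Sum>y\<in>Y ` \<Omega>. g y * pr \<Omega> w (\<lambda>\<omega>. Y \<omega> = y))"
    using fin by (subst sum.mono_neutral_right) (auto simp: pr_eq_zero sum_distrib_left)
  finally show ?thesis .
qed

lemma tvd_nonneg: "0 \<le> tvd U p q"
  unfolding tvd_def by (auto intro: sum_nonneg)

lemma tvd_prod_cond:
  assumes "\<And>\<omega>. \<omega> \<in> \<Omega> \<Longrightarrow> 0 \<le> w \<omega>"
  shows "tvd (A \<times> B) (prod_cond \<Omega> w Y R E C1) (prod_cond \<Omega> w Y R E C2)
       = (1/2) * (\<Sum>y\<in>A. (\<Sum>r\<in>B. \<bar>cpr \<Omega> w R (\<lambda>\<omega>. E \<omega> \<and> C1 y \<omega>) r - cpr \<Omega> w R (\<lambda>\<omega>. E \<omega> \<and> C2 y \<omega>) r\<bar>)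
                               * pr \<Omega> w (\<lambda>\<omega>. Y \<omega> = y))"
proof -
  have "0 \<le> pr \<Omega> w (\<lambda>\<omega>. Y \<omega> = y)" for y
    using assms by (rule pr_nonneg)
  then show ?thesis
    unfolding tvd_def prod_cond_def sum.cartesian_product'
    by (auto simp: sum_distrib_right abs_mult right_diff_distrib[symmetric] intro!: sum.cong)
qed

lemma tvd_condY_bot_on_le:
  fixes Y :: "'w \<Rightarrow> nat \<Rightarrow> 'b option"
  assumes fin: "finite \<Omega>" and w: "\<And>\<omega>. \<omega> \<in> \<Omega> \<Longrightarrow> 0 \<le> w \<omega>"
    and Y: "\<And>\<omega>. Y \<omega> \<in> extensional {1..k}" and c: "0 \<le> c"
    and push: "\<And>y. pr \<Omega> w (\<lambda>\<omega>. bot_on k T (Y \<omega>) = bot_on k T y) \<le> c * pr \<Omega> w (\<lambda>\<omega>. Y \<omega> = bot_on k T y)"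
  shows "(\<Sum>y\<in>Y ` \<Omega>. (\<Sum>r\<in>R ` \<Omega>. \<bar>cpr \<Omega> w R (\<lambda>\<omega>. E \<omega> \<and> Y \<omega> = bot_on k T y) r
                                  - cpr \<Omega> w R (\<lambda>\<omega>. E \<omega> \<and> condY Y {} ({1..k} - {t}) (bot_on k T y) \<omega>) r\<bar>)
                    * pr \<Omega> w (\<lambda>\<omega>. Y \<omega> = y))
       \<le> 2 * c * tvd (Y ` \<Omega> \<times> R ` \<Omega>)
           (prod_cond \<Omega> w Y R E (condY Y {} {1..k}))
           (prod_cond \<Omega> w Y R E (condY Y {} ({1..k} - {t})))"
proof -
  define g where "g v = (\<Sum>r\<in>R ` \<Omega>. \<bar>cpr \<Omega> w R (\<lambda>\<omega>. E \<omega> \<and> Y \<omega> = bot_on k {} v) r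
                                  - cpr \<Omega> w R (\<lambda>\<omega>. E \<omega> \<and> condY Y {} ({1..k} - {t}) v \<omega>) r\<bar>)" for v
  have tvd_eq: "tvd (Y ` \<Omega> \<times> R ` \<Omega>)
              (prod_cond \<Omega> w Y R E (condY Y {} {1..k}))
              (prod_cond \<Omega> w Y R E (condY Y {} ({1..k} - {t})))
      = (1/2) * (\<Sum>y\<in>Y ` \<Omega>. g y * pr \<Omega> w (\<lambda>\<omega>. Y \<omega> = y))"
    unfolding g_def condY_eq_bot_on[where Y = Y, OF empty_subsetI Y, unfolded Diff_empty]
    by (rule tvd_prod_cond[OF w])
  have "(\<Sum>y\<in>Y ` \<Omega>. g (bot_on k T y) * pr \<Omega> w (\<lambda>\<omega>. Y \<omega> = y))
      \<le> c * (\<Sum>y\<in>Y ` \<Omega>. g y * pr \<Omega> w (\<lambda>\<omega>. Y \<omega> = y))"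
    using fin w c push by (intro sum_pr_push_le) (auto simp: g_def intro: sum_nonneg)
  also have "\<dots> = 2 * c * tvd (Y ` \<Omega> \<times> R ` \<Omega>)
              (prod_cond \<Omega> w Y R E (condY Y {} {1..k}))
              (prod_cond \<Omega> w Y R E (condY Y {} ({1..k} - {t})))"
    unfolding tvd_eq by simp
  finally show ?thesis
    by (simp add: g_def bot_on_bot_on)
qed

lemma tvd_condY_insert_le:
  fixes Y :: "'w \<Rightarrow> nat \<Rightarrow> 'b option"
  assumes fin: "finite \<Omega>" and w: "\<And>\<omega>. \<omega> \<in> \<Omega> \<Longrightarrow> 0 \<le> w \<omega>"
    and Y: "\<And>\<omega>. Y \<omega> \<in> extensional {1..k}" and c: "1 \<le> c"
    and push: "\<And>T y. T \<subseteq> {1..k} \<Longrightarrow>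
      pr \<Omega> w (\<lambda>\<omega>. bot_on k T (Y \<omega>) = bot_on k T y) \<le> c ^ card T * pr \<Omega> w (\<lambda>\<omega>. Y \<omega> = bot_on k T y)"
    and S: "S \<subseteq> {1..k}" and t: "t \<in> {1..k} - S"
  shows "tvd (Y ` \<Omega> \<times> R ` \<Omega>)
           (prod_cond \<Omega> w Y R E (condY Y S ({1..k} - S)))
           (prod_cond \<Omega> w Y R E (condY Y (insert t S) ({1..k} - insert t S)))
         \<le> 2 * c ^ (card S + 1) * tvd (Y ` \<Omega> \<times> R ` \<Omega>)
           (prod_cond \<Omega> w Y R E (condY Y {} {1..k}))
           (prod_cond \<Omega> w Y R E (condY Y {} ({1..k} - {t})))"
    (is "?lhs \<le> 2 * c ^ (card S + 1) * ?rhs")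
proof -
  define cc where "cc v = cpr \<Omega> w R (\<lambda>\<omega>. E \<omega> \<and> Y \<omega> = v)" for v
  define cm where "cm v = cpr \<Omega> w R (\<lambda>\<omega>. E \<omega> \<and> condY Y {} ({1..k} - {t}) v \<omega>)" for v
  define gap where "gap T = (\<Sum>y\<in>Y ` \<Omega>. (\<Sum>r\<in>R ` \<Omega>. \<bar>cc (bot_on k T y) r - cm (bot_on k T y) r\<bar>)
                              * pr \<Omega> w (\<lambda>\<omega>. Y \<omega> = y))" for T
  have St: "insert t S \<subseteq> {1..k}" using S t by auto
  have gap_le: "gap T \<le> 2 * c ^ card T * ?rhs" if "T \<subseteq> {1..k}" for T
    unfolding gap_def cc_def cm_def
    using fin w Y c push[OF that] by (intro tvd_condY_bot_on_le) auto
  \<comment> \<open>Conditioning on Y^-t does not see coordinate \<open>t\<close>: the pivot of the triangle inequality.\<close>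
  have cm_t: "cm (bot_on k S y) = cm (bot_on k (insert t S) y)" for y
    unfolding cm_def condY_def using t by (auto simp: bot_on_def restrict_def fun_eq_iff)
  have "?lhs = (1/2) * (\<Sum>y\<in>Y ` \<Omega>. (\<Sum>r\<in>R ` \<Omega>. \<bar>cc (bot_on k S y) r - cc (bot_on k (insert t S) y) r\<bar>)
                           * pr \<Omega> w (\<lambda>\<omega>. Y \<omega> = y))"
    unfolding cc_def condY_eq_bot_on[OF S Y] condY_eq_bot_on[OF St Y]
    by (rule tvd_prod_cond[OF w])
  also have "\<dots> \<le> (1/2) * (gap S + gap (insert t S))"
    unfolding gap_def cm_t distrib_right[symmetric] sum.distrib[symmetric]
    using w by (intro mult_left_mono sum_mono mult_right_mono pr_nonneg) auto
  also have "\<dots> \<le> (1/2) * (2 * c ^ card S * ?rhs + 2 * c ^ (card S + 1) * ?rhs)"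
    using gap_le[OF S] gap_le[OF St] finite_subset[OF S] t by simp
  also have "\<dots> = (c ^ card S + c ^ (card S + 1)) * ?rhs"
    by (simp add: algebra_simps)
  also have "\<dots> \<le> (c ^ (card S + 1) + c ^ (card S + 1)) * ?rhs"
    using power_increasing[of "card S" "card S + 1" c] c
    by (intro mult_right_mono add_right_mono tvd_nonneg) auto
  also have "\<dots> = 2 * c ^ (card S + 1) * ?rhs"
    by simp
  finally show ?thesis .
qed

section \<open>Anchored games\<close>

definition yval :: "nat \<Rightarrow> (nat \<Rightarrow> 'q set) \<Rightarrow> (nat \<Rightarrow> 'q) \<Rightarrow> nat \<Rightarrow> 'q option" where
  "yval k Xperp x = (\<lambda>t\<in>{1..k}. if x t \<in> Xperp t then None else Some (x t))"

lemma Yrv_eq_yval: "Yrv k Xperp i \<omega> = yval k Xperp (fst \<omega> i)"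
  unfolding Yrv_def yval_def ..

lemma yval_extensional: "yval k Xperp x \<in> extensional {1..k}"
  by (simp add: yval_def)

locale anchored_game =
  fixes k :: nat and Xs :: "nat \<Rightarrow> 'q set" and As :: "nat \<Rightarrow> 'a set"
    and \<mu> :: "(nat \<Rightarrow> 'q) \<Rightarrow> real" and \<alpha> :: real and Xperp :: "nat \<Rightarrow> 'q set"
  assumes game: "is_game k Xs As \<mu>" and anch: "anchored k Xs \<mu> \<alpha> Xperp"
begin

abbreviation "X \<equiv> PiE {1..k} Xs"

definition anchor_prob :: "nat \<Rightarrow> real" where
  "anchor_prob s = (\<Sum>x\<in>X. if x s \<in> Xperp s then \<mu> x else 0)"

definition anchors :: "(nat \<Rightarrow> 'q) \<Rightarrow> nat set" where
  "anchors x = {t\<in>{1..k}. x t \<in> Xperp t}"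

lemma finite_Xs: "t \<in> {1..k} \<Longrightarrow> finite (Xs t)"
  using game by (auto simp: is_game_def)

lemma mu_nonneg: "x \<in> X \<Longrightarrow> 0 \<le> \<mu> x"
  using game by (auto simp: is_game_def)

lemma sum_mu: "(\<Sum>x\<in>X. \<mu> x) = 1"
  using game by (auto simp: is_game_def)

lemma mu_factor:
  "x \<in> X \<Longrightarrow> \<mu> x = marg k Xs \<mu> ({1..k} - anchors x) x * (\<Prod>t\<in>anchors x. marg k Xs \<mu> {t} x)"
  using anch by (auto simp: anchored_def anchors_def)

lemma alpha_pos: "0 < \<alpha>"
  using anch by (auto simp: anchored_def)

lemma alpha_le_1: "\<alpha> \<le> 1"
  using anch by (auto simp: anchored_def)

lemma anchor_prob_ge: "s \<in> {1..k} \<Longrightarrow> \<alpha> \<le> anchor_prob s"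
  using anch by (auto simp: anchored_def anchor_prob_def)

lemma anchor_prob_le_1: "anchor_prob s \<le> 1"
  unfolding anchor_prob_def sum_mu[symmetric] using mu_nonneg by (intro sum_mono) auto

lemma sum_marg:
  assumes "N \<subseteq> {1..k}"
  shows "(\<Sum>u\<in>PiE N Xs. g u * marg k Xs \<mu> N u) = (\<Sum>x\<in>X. g (restrict x N) * \<mu> x)"
proof -
  have "marg k Xs \<mu> N u = (\<Sum>x\<in>X. if restrict x N = u then \<mu> x else 0)" if "u \<in> PiE N Xs" for u
    unfolding marg_def using that by (intro sum.cong refl) (auto simp: PiE_def extensional_def fun_eq_iff)
  then have "(\<Sum>u\<in>PiE N Xs. g u * marg k Xs \<mu> N u)
      = (\<Sum>u\<in>PiE N Xs. g u * (\<Sum>x\<in>X. if restrict x N = u then \<mu> x else 0))"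
    by simp
  also have "\<dots> = (\<Sum>x\<in>X. g (restrict x N) * \<mu> x)"
  proof (subst sum_fibres)
    show "finite (PiE N Xs)"
      using assms finite_Xs by (intro finite_PiE) (auto intro: finite_subset)
    have "restrict x N \<in> PiE N Xs" if "x \<in> X" for x
      using that assms by (auto simp: PiE_iff)
    then show "(\<Sum>x\<in>X. if restrict x N \<in> PiE N Xs then g (restrict x N) * \<mu> x else 0)
        = (\<Sum>x\<in>X. g (restrict x N) * \<mu> x)"
      by (intro sum.cong) auto
  qed
  finally show ?thesis .
qed

lemma sum_marg_single:
  assumes "s \<in> {1..k}"
  shows "(\<Sum>b\<in>Xs s. g b * marg k Xs \<mu> {s} (\<lambda>_. b)) = (\<Sum>x\<in>X. g (x s) * \<mu> x)"
proof -
  have "marg k Xs \<mu> {s} (\<lambda>_. b) = (\<Sum>x\<in>X. if x s = b then \<mu> x else 0)" for b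
    by (simp add: marg_def)
  then show ?thesis
    using assms finite_Xs by (simp add: sum_fibres) (auto simp: PiE_iff intro!: sum.cong)
qed

lemma sum_PiE_anchor_marg:
  assumes F: "F \<subseteq> {1..k}"
  shows "(\<Sum>v\<in>PiE F Xs. \<Prod>s\<in>F. (if v s \<in> Xperp s then 1 else 0) * marg k Xs \<mu> {s} (\<lambda>_. v s))
       = (\<Prod>s\<in>F. anchor_prob s)"
proof -
  have "(\<Sum>v\<in>PiE F Xs. \<Prod>s\<in>F. (if v s \<in> Xperp s then 1 else 0) * marg k Xs \<mu> {s} (\<lambda>_. v s))
      = (\<Prod>s\<in>F. \<Sum>b\<in>Xs s. (if b \<in> Xperp s then 1 else 0) * marg k Xs \<mu> {s} (\<lambda>_. b))"
    using F finite_Xs finite_subset[OF F] by (subst prod_sum_PiE) auto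
  also have "\<dots> = (\<Prod>s\<in>F. anchor_prob s)"
  proof (rule prod.cong)
    fix s assume "s \<in> F"
    then have "s \<in> {1..k}" using F by auto
    then show "(\<Sum>b\<in>Xs s. (if b \<in> Xperp s then 1 else 0) * marg k Xs \<mu> {s} (\<lambda>_. b)) = anchor_prob s"
      unfolding sum_marg_single[OF \<open>s \<in> {1..k}\<close>] anchor_prob_def by (intro sum.cong) auto
  qed simp
  finally show ?thesis .
qed

lemma anchor_factor:
  assumes F: "F \<subseteq> {1..k}" and Q: "\<And>x. Q (restrict x ({1..k} - F)) = Q x"
  shows "(\<Sum>x\<in>X. if Q x \<and> anchors x = F then \<mu> x else 0)
       = (\<Prod>s\<in>F. anchor_prob s) * (\<Sum>x\<in>X. if Q x \<and> anchors x \<subseteq> F then \<mu> x else 0)"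
proof -
  define N where "N = {1..k} - F"
  define g where "g u = (if Q u \<and> (\<forall>s\<in>N. u s \<notin> Xperp s) then 1 else 0 :: real)" for u :: "nat \<Rightarrow> 'q"
  define f where "f u = g u * marg k Xs \<mu> N u" for u
  define h where "h s b = (if b \<in> Xperp s then 1 else 0) * marg k Xs \<mu> {s} (\<lambda>_. b)" for s b
  have marg_restrict: "marg k Xs \<mu> M (restrict x M') = marg k Xs \<mu> M x" if "M \<subseteq> M'" for M M' x
    unfolding marg_def using that by (intro sum.cong) auto
  have marg_single: "marg k Xs \<mu> {s} x = marg k Xs \<mu> {s} (\<lambda>_. x s)" for s x
    unfolding marg_def by simp
  have "(\<Sum>x\<in>X. if Q x \<and> anchors x = F then \<mu> x else 0)
      = (\<Sum>x\<in>PiE (N \<union> F) Xs. f (restrict x N) * (\<Prod>s\<in>F. h s (restrict x F s)))"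
  proof (rule sum.cong)
    show "X = PiE (N \<union> F) Xs" using F by (simp add: N_def Un_absorb2)
  next
    fix x assume x: "x \<in> PiE (N \<union> F) Xs"
    have "anchors x = F \<longleftrightarrow> (\<forall>s\<in>N. x s \<notin> Xperp s) \<and> (\<forall>s\<in>F. x s \<in> Xperp s)"
      using F by (auto simp: anchors_def N_def)
    then show "(if Q x \<and> anchors x = F then \<mu> x else 0) = f (restrict x N) * (\<Prod>s\<in>F. h s (restrict x F s))"
      using x F mu_factor[of x] Q[of x] finite_subset[OF F]
      by (auto simp: f_def g_def h_def N_def marg_restrict prod_zero_iff marg_single[of _ x] Un_absorb2)
  qed
  also have "\<dots> = (\<Sum>u\<in>PiE N Xs. f u) * (\<Sum>v\<in>PiE F Xs. \<Prod>s\<in>F. h s (v s))"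
    by (rule sum_PiE_Un_mult) (auto simp: N_def)
  also have "(\<Sum>u\<in>PiE N Xs. f u) = (\<Sum>x\<in>X. g (restrict x N) * \<mu> x)"
    unfolding f_def by (rule sum_marg) (simp add: N_def)
  also have "\<dots> = (\<Sum>x\<in>X. if Q x \<and> anchors x \<subseteq> F then \<mu> x else 0)"
  proof (intro sum.cong refl)
    fix x
    have "anchors x \<subseteq> F \<longleftrightarrow> (\<forall>s\<in>N. x s \<notin> Xperp s)"
      using F by (auto simp: anchors_def N_def)
    then show "g (restrict x N) * \<mu> x = (if Q x \<and> anchors x \<subseteq> F then \<mu> x else 0)"
      using Q[of x] by (simp add: g_def N_def)
  qed
  also have "(\<Sum>v\<in>PiE F Xs. \<Prod>s\<in>F. h s (v s)) = (\<Prod>s\<in>F. anchor_prob s)"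
    unfolding h_def by (rule sum_PiE_anchor_marg[OF F])
  finally show ?thesis by (simp only: mult.commute)
qed

lemma anchor_upper_sum:
  assumes R: "R \<subseteq> {1..k}" and T: "T \<subseteq> R"
    and Q_local: "\<And>x. Q (restrict x ({1..k} - R)) = Q x"
    and Q_anchors: "\<And>x. Q x \<Longrightarrow> anchors x \<subseteq> R"
  shows "(\<Prod>s\<in>T. anchor_prob s) * (\<Sum>x\<in>X. if Q x \<and> R - T \<subseteq> anchors x then \<mu> x else 0)
       = (\<Sum>x\<in>X. if Q x \<and> anchors x = R then \<mu> x else 0)"
proof -
  define \<pi> where "\<pi> F = (\<Sum>x\<in>X. if Q x \<and> anchors x = F then \<mu> x else 0)" for F
  have finite_R: "finite R"
    using R finite_subset by blast
  have sum_\<pi>: "sum \<pi> P = (\<Sum>x\<in>X. if Q x \<and> anchors x \<in> P then \<mu> x else 0)" if "finite P" for P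
  proof -
    have "sum \<pi> P = (\<Sum>F\<in>P. 1 * (\<Sum>x\<in>X. if anchors x = F then (if Q x then \<mu> x else 0) else 0))"
      unfolding \<pi>_def by (auto intro!: sum.cong)
    also have "\<dots> = (\<Sum>x\<in>X. if anchors x \<in> P then 1 * (if Q x then \<mu> x else 0) else 0)"
      by (rule sum_fibres[OF that])
    finally show ?thesis by (auto intro: sum.cong)
  qed
  have factor: "\<pi> F = (\<Prod>s\<in>F. anchor_prob s) * sum \<pi> (Pow F)" if F: "F \<subseteq> R" for F
  proof -
    have "Q (restrict x ({1..k} - F)) = Q x" for x
      using Q_local[of "restrict x ({1..k} - F)"] Q_local[of x] F by (simp add: Int_absorb1 Diff_mono)
    then have "\<pi> F = (\<Prod>s\<in>F. anchor_prob s) * (\<Sum>x\<in>X. if Q x \<and> anchors x \<subseteq> F then \<mu> x else 0)"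
      unfolding \<pi>_def using F R by (intro anchor_factor) auto
    with F show ?thesis
      using finite_subset[OF F finite_R] by (simp add: sum_\<pi>)
  qed
  have "(\<Prod>s\<in>T. anchor_prob s) * sum \<pi> {F. R - T \<subseteq> F \<and> F \<subseteq> R} = \<pi> R"
  proof (rule pattern_upper_sum[OF finite_R _ _ factor T])
    show "0 \<le> anchor_prob s \<and> anchor_prob s \<le> 1" if "s \<in> R" for s
      using that R alpha_pos anchor_prob_ge[of s] anchor_prob_le_1 by auto
    show "0 \<le> \<pi> F" for F
      unfolding \<pi>_def using mu_nonneg by (auto intro: sum_nonneg)
  qed
  moreover have "sum \<pi> {F. R - T \<subseteq> F \<and> F \<subseteq> R} = (\<Sum>x\<in>X. if Q x \<and> R - T \<subseteq> anchors x then \<mu> x else 0)"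
    using Q_anchors finite_R by (subst sum_\<pi>) (auto intro!: sum.cong rev_finite_subset[of "Pow R"])
  ultimately show ?thesis
    by (simp add: \<pi>_def)
qed

lemma anchor_indep:
  assumes T: "T \<subseteq> {1..k}"
  shows "(\<Prod>s\<in>T. anchor_prob s) * (\<Sum>x\<in>X. if bot_on k T (yval k Xperp x) = bot_on k T y then \<mu> x else 0)
       = (\<Sum>x\<in>X. if yval k Xperp x = bot_on k T y then \<mu> x else 0)"
proof -
  define z where "z = bot_on k T y"
  define G where "G = {s\<in>{1..k}. z s \<noteq> None}"
  define R where "R = {1..k} - G"
  define good where "good x \<longleftrightarrow> (\<forall>s\<in>G. yval k Xperp x s = z s)" for x
  have TR: "T \<subseteq> R"
    using T by (auto simp: R_def G_def z_def bot_on_def)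
  have yval_None: "yval k Xperp x s = None \<longleftrightarrow> x s \<in> Xperp s" if "s \<in> {1..k}" for x s
    using that by (simp add: yval_def)
  have good_anchors: "anchors x \<subseteq> R" if "good x" for x
  proof
    fix s assume "s \<in> anchors x"
    then have "s \<in> {1..k}" "yval k Xperp x s = None"
      using yval_None by (auto simp: anchors_def)
    with that show "s \<in> R" by (auto simp: good_def R_def G_def)
  qed
  have event: "bot_on k T' (yval k Xperp x) = z \<longleftrightarrow> good x \<and> R - T' \<subseteq> anchors x"
    if "T' \<subseteq> T" for T' x
  proof -
    have "bot_on k T' (yval k Xperp x) = z \<longleftrightarrow> (\<forall>s\<in>{1..k} - T'. yval k Xperp x s = z s)"
      using that by (auto simp: z_def bot_on_def fun_eq_iff)
    also have "\<dots> \<longleftrightarrow> good x \<and> (\<forall>s\<in>R - T'. yval k Xperp x s = None)"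
    proof -
      have "{1..k} - T' = G \<union> (R - T')" using that TR by (auto simp: R_def G_def)
      moreover have "z s = None" if "s \<in> R" for s using that by (simp add: R_def G_def)
      ultimately show ?thesis unfolding good_def by auto
    qed
    also have "\<dots> \<longleftrightarrow> good x \<and> R - T' \<subseteq> anchors x"
      using yval_None by (auto simp: anchors_def R_def)
    finally show ?thesis .
  qed
  have "yval k Xperp x = z \<longleftrightarrow> good x \<and> anchors x = R" for x
    using event[of "{}" x] good_anchors[of x] by (auto simp: bot_on_empty[OF yval_extensional])
  moreover have "good (restrict x ({1..k} - R)) = good x" for x
    by (auto simp: good_def yval_def R_def)
  ultimately show ?thesis
    using anchor_upper_sum[of R T good] TR event[OF order_refl] good_anchors
    by (simp add: R_def z_def)
qed

lemma finite_Samp: "finite (Samp k n m Xs)"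
proof -
  have "finite (Dsets k)"
    unfolding Dsets_def by (rule finite_subset[of _ "Pow {1..k}"]) auto
  then show ?thesis
    unfolding Samp_def using finite_Xs by (intro finite_cartesian_product finite_PiE) auto
qed

lemma wt_nonneg: "\<omega> \<in> Samp k n m Xs \<Longrightarrow> 0 \<le> wt k n m \<mu> \<omega>"
  using mu_nonneg by (auto simp: Samp_def wt_def intro!: prod_nonneg mult_nonneg_nonneg)

text \<open>The second factor is the total weight of the \<open>D\<close>-components.\<close>

lemma pr_coordinate:
  assumes i: "i \<in> {1..n}"
  shows "pr (Samp k n m Xs) (wt k n m \<mu>) (\<lambda>\<omega>. P (fst \<omega> i))
       = (\<Sum>x\<in>X. if P x then \<mu> x else 0) * (\<Sum>d\<in>PiE {1..m} (\<lambda>_. Dsets k). \<Prod>j\<in>{1..m}. 1 / real (card (Dsets k)))"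
proof -
  define c where "c = (\<Prod>j\<in>{1..m}. 1 / real (card (Dsets k)))"
  define f where "f j x = (if j = i \<and> \<not> P x then 0 else \<mu> x)" for j x
  have fin_X: "finite X"
    using finite_Xs by (intro finite_PiE) auto
  have weight: "(if P (xs i) then (\<Prod>j\<in>{1..n}. \<mu> (xs j)) * c else 0) = (\<Prod>j\<in>{1..n}. f j (xs j)) * c"
    for xs :: "nat \<Rightarrow> nat \<Rightarrow> 'q"
  proof (cases "P (xs i)")
    case True
    then have "(\<Prod>j\<in>{1..n}. f j (xs j)) = (\<Prod>j\<in>{1..n}. \<mu> (xs j))"
      by (intro prod.cong) (auto simp: f_def)
    with True show ?thesis by simp
  next
    case False
    then have "(\<Prod>j\<in>{1..n}. f j (xs j)) = 0"
      using i by (intro prod_zero) (auto simp: f_def)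
    with False show ?thesis by simp
  qed
  have "pr (Samp k n m Xs) (wt k n m \<mu>) (\<lambda>\<omega>. P (fst \<omega> i))
      = (\<Sum>(xs, d)\<in>PiE {1..n} (\<lambda>_. X) \<times> PiE {1..m} (\<lambda>_. Dsets k). (\<Prod>j\<in>{1..n}. f j (xs j)) * c)"
    unfolding pr_def Samp_def wt_def c_def[symmetric] weight[symmetric]
    by (intro sum.cong refl) (auto simp: split_beta)
  also have "\<dots> = (\<Sum>xs\<in>PiE {1..n} (\<lambda>_. X). \<Prod>j\<in>{1..n}. f j (xs j)) * (\<Sum>d\<in>PiE {1..m} (\<lambda>_. Dsets k). c)"
    by (simp only: sum_product sum.cartesian_product)
  also have "(\<Sum>xs\<in>PiE {1..n} (\<lambda>_. X). \<Prod>j\<in>{1..n}. f j (xs j)) = (\<Prod>j\<in>{1..n}. \<Sum>x\<in>X. f j x)"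
    by (rule prod_sum_PiE[symmetric]) (use fin_X in simp_all)
  also have "\<dots> = (\<Sum>x\<in>X. f i x) * (\<Prod>j\<in>{1..n} - {i}. \<Sum>x\<in>X. f j x)"
    using i by (simp add: prod.remove)
  also have "(\<Prod>j\<in>{1..n} - {i}. \<Sum>x\<in>X. f j x) = 1"
    using sum_mu by (intro prod.neutral) (auto simp: f_def)
  also have "(\<Sum>x\<in>X. f i x) = (\<Sum>x\<in>X. if P x then \<mu> x else 0)"
    unfolding f_def by (intro sum.cong) auto
  finally show ?thesis by (simp add: c_def)
qed

lemma pr_bot_on_Yrv_le:
  assumes i: "i \<in> {1..n}" and T: "T \<subseteq> {1..k}"
  shows "pr (Samp k n m Xs) (wt k n m \<mu>) (\<lambda>\<omega>. bot_on k T (Yrv k Xperp i \<omega>) = bot_on k T y)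
       \<le> (1 / \<alpha>) ^ card T * pr (Samp k n m Xs) (wt k n m \<mu>) (\<lambda>\<omega>. Yrv k Xperp i \<omega> = bot_on k T y)"
proof -
  define L where "L = (\<Sum>x\<in>X. if bot_on k T (yval k Xperp x) = bot_on k T y then \<mu> x else 0)"
  define R where "R = (\<Sum>x\<in>X. if yval k Xperp x = bot_on k T y then \<mu> x else 0)"
  define c where "c = (\<Sum>d\<in>PiE {1..m} (\<lambda>_. Dsets k). \<Prod>j\<in>{1..m}. 1 / real (card (Dsets k)))"
  have "0 \<le> L"
    unfolding L_def using mu_nonneg by (auto intro: sum_nonneg)
  moreover have "\<alpha> ^ card T \<le> (\<Prod>s\<in>T. anchor_prob s)"
    using prod_mono[of T "\<lambda>_. \<alpha>" anchor_prob] T alpha_pos anchor_prob_ge by force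
  ultimately have "\<alpha> ^ card T * L \<le> (\<Prod>s\<in>T. anchor_prob s) * L"
    by (rule mult_right_mono[rotated])
  also have "\<dots> = R"
    unfolding L_def R_def by (rule anchor_indep[OF T])
  finally have "L \<le> (1 / \<alpha>) ^ card T * R"
    using alpha_pos by (simp add: power_one_over field_simps)
  moreover have "0 \<le> c"
    unfolding c_def by (auto intro: sum_nonneg)
  ultimately have "L * c \<le> (1 / \<alpha>) ^ card T * (R * c)"
    by (metis mult.assoc mult_right_mono)
  moreover have "pr (Samp k n m Xs) (wt k n m \<mu>) (\<lambda>\<omega>. bot_on k T (Yrv k Xperp i \<omega>) = bot_on k T y) = L * c"
    unfolding Yrv_eq_yval L_def c_def by (rule pr_coordinate[OF i])
  moreover have "pr (Samp k n m Xs) (wt k n m \<mu>) (\<lambda>\<omega>. Yrv k Xperp i \<omega> = bot_on k T y) = R * c"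
    unfolding Yrv_eq_yval R_def c_def by (rule pr_coordinate[OF i])
  ultimately show ?thesis by simp
qed

end

theorem lemma4p6:
  fixes k n m :: nat and Xs :: "nat \<Rightarrow> 'q set" and As :: "nat \<Rightarrow> 'a set"
    and \<mu> :: "(nat \<Rightarrow> 'q) \<Rightarrow> real" and V :: "(nat \<Rightarrow> 'q) \<Rightarrow> (nat \<Rightarrow> 'a) \<Rightarrow> bool"
    and \<alpha> :: real and Xperp :: "nat \<Rightarrow> 'q set"
    and f :: "nat \<Rightarrow> (nat \<Rightarrow> 'q) \<Rightarrow> (nat \<Rightarrow> 'a)"
    and i t :: nat and S :: "nat set"
  assumes game: "is_game k Xs As \<mu>"
    and anch: "anchored k Xs \<mu> \<alpha> Xperp"
    and m_ge: "1 \<le> m" and m_lt: "m < n"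
    and strat: "strategy k n Xs As f"
    and W_pos: "pr (Samp k n m Xs) (wt k n m \<mu>) (Wev k n m f V) > 0"
    and i_in: "i \<in> {1..m}"
    and S_sub: "S \<subseteq> {1..k}"
    and t_in: "t \<in> {1..k} - S"
  shows "tvd (Usupp k n m Xs Xperp f i)
            (Pdist k n m Xs \<mu> Xperp f V i S ({1..k} - S))
            (Pdist k n m Xs \<mu> Xperp f V i (S \<union> {t}) ({1..k} - S - {t}))
         \<le> 2 * (1 / \<alpha>) ^ (card S + 1) *
           tvd (Usupp k n m Xs Xperp f i)
            (Pdist k n m Xs \<mu> Xperp f V i {} {1..k})
            (Pdist k n m Xs \<mu> Xperp f V i {} ({1..k} - {t}))"
proof -
  interpret anchored_game k Xs As \<mu> \<alpha> Xperp
    using game anch by unfold_locales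
  have i: "i \<in> {1..n}"
    using i_in m_lt by auto
  have insert_t: "S \<union> {t} = insert t S" "{1..k} - S - {t} = {1..k} - insert t S"
    by auto
  have "1 \<le> 1 / \<alpha>"
    using alpha_pos alpha_le_1 by simp
  then show ?thesis
    unfolding Pdist_def Usupp_def insert_t
    using finite_Samp wt_nonneg pr_bot_on_Yrv_le[OF i] S_sub t_in
    by (intro tvd_condY_insert_le) (auto simp: Yrv_def)
qed
end
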